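(* If $\tilde y\in\mathbb{R}^{\mathcal{A}}$ satisfies $\phi_\lambda(\tilde y)<0$ for some $\lambda\in\Lambda_X(\mathcal{A})$, then $\exp\tilde y\notin C_X(\mathcal{A})^*$ (with $\exp$ applied entrywise).
   Context: $X\subset\mathbb{R}^n$ is a nonempty closed convex set and $\mathcal{A}\subset\mathbb{R}^n$ is a nonempty finite set such that the functions $x\mapsto\exp(\alpha^Tx)$, $\alpha\in\mathcal{A}$, are linearly independent on $X$. $\mathbb{R}^{\mathcal{A}}$ denotes real vectors indexed by $\mathcal{A}$. $\mathcal{A}\nu=\sum_\alpha\alpha\nu_\alpha$. $\sigma_X(y)=\sup\{y^Tx:x\in X\}$. $N_\beta=\{\nu\in\mathbb{R}^{\mathcal{A}}:\nu_\alpha\ge0\ \forall\alpha\neq\beta,\ \sum_\alpha\nu_\alpha=0\}$. A vector $\nu^\star\in N_\beta$ is an $X$-circuit of $\mathcal{A}$ if (1) $\nu^\star\neq0$, (2) $\sigma_X(-\mathcal{A}\nu^\star)<\infty$, and (3) $\nu^\star$ cannot be written as a convex combination of two non-proportional vectors $\nu^{(1)},\nu^{(2)}\in N_\beta$ such that the map $\nu\mapsto\sigma_X(-\mathcal{A}\nu)$ is affine on the segment $[\nu^{(1)},\nu^{(2)}]$. $\Lambda_X(\mathcal{A})$ is the set of all $X$-circuits $\lambda$ (over all $\beta\in\mathcal{A}$) normalized so that the unique negative entry equals $-1$. The functional form of $\lambda$ is the affine function $\phi_\lambda(y)=\sum_\alpha y_\alpha\lambda_\alpha+\sigma_X(-\mathcal{A}\lambda)$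 on $\mathbb{R}^{\mathcal{A}}$. Signomials $f=\sum_\alpha c_\alpha\mathrm{e}^\alpha$, $\mathrm{e}^\alpha(x)=\exp(\alpha^Tx)$, are identified with $c\in\mathbb{R}^{\mathcal{A}}$; $C_X(\mathcal{A},\beta)$ is the set of $c$ with $f$ nonnegative on $X$ and $c_\alpha\ge0$ for $\alpha\ne\beta$; $C_X(\mathcal{A})=\sum_{\beta\in\mathcal{A}}C_X(\mathcal{A},\beta)$, and $C_X(\mathcal{A})^*=\{v\in\mathbb{R}^{\mathcal{A}}:v^Tc\ge0\ \forall c\in C_X(\mathcal{A})\}$. *)

theory Defs
  imports "HOL-Analysis.Analysis"
begin

text \<open>Vectors in R^A are functions on the exponent space; only entries on A matter
  (circuits/cone elements are required to vanish outside A).\<close>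

definition supp_in :: "(real^'n) set \<Rightarrow> (real^'n \<Rightarrow> real) \<Rightarrow> bool" where
  "supp_in A v \<longleftrightarrow> (\<forall>\<alpha>. \<alpha> \<notin> A \<longrightarrow> v \<alpha> = 0)"

definition Amul :: "(real^'n) set \<Rightarrow> (real^'n \<Rightarrow> real) \<Rightarrow> real^'n" where
  "Amul A \<nu> = (\<Sum>\<alpha>\<in>A. \<nu> \<alpha> *\<^sub>R \<alpha>)"

definition support_fun :: "(real^'n) set \<Rightarrow> real^'n \<Rightarrow> ereal" where
  "support_fun X y = (SUP x\<in>X. ereal (y \<bullet> x))"

definition Ncone :: "(real^'n) set \<Rightarrow> real^'n \<Rightarrow> (real^'n \<Rightarrow> real) set" where
  "Ncone A \<beta> = {\<nu>. supp_in A \<nu> \<and> (\<forall>\<alpha>\<in>A. \<alpha> \<noteq> \<beta> \<longrightarrow> \<nu> \<alpha> \<ge> 0) \<and> (\<Sum>\<alpha>\<in>A. \<nu> \<alpha>) = 0}"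

definition proportional :: "(real^'n) set \<Rightarrow> (real^'n \<Rightarrow> real) \<Rightarrow> (real^'n \<Rightarrow> real) \<Rightarrow> bool" where
  "proportional A u v \<longleftrightarrow> (\<exists>t::real. \<forall>\<alpha>\<in>A. u \<alpha> = t * v \<alpha>) \<or> (\<exists>t::real. \<forall>\<alpha>\<in>A. v \<alpha> = t * u \<alpha>)"

definition affine_on_segment ::
  "(real^'n) set \<Rightarrow> (real^'n) set \<Rightarrow> (real^'n \<Rightarrow> real) \<Rightarrow> (real^'n \<Rightarrow> real) \<Rightarrow> bool" where
  "affine_on_segment X A \<nu>1 \<nu>2 \<longleftrightarrow>
     (\<exists>a b :: real. \<forall>t\<in>{0..1::real}.
        support_fun X (- Amul A (\<lambda>\<alpha>. (1 - t) * \<nu>1 \<alpha> + t * \<nu>2 \<alpha>)) = ereal (a + b * t))"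

definition X_circuit ::
  "(real^'n) set \<Rightarrow> (real^'n) set \<Rightarrow> real^'n \<Rightarrow> (real^'n \<Rightarrow> real) \<Rightarrow> bool" where
  "X_circuit X A \<beta> \<nu> \<longleftrightarrow>
     \<beta> \<in> A \<and> \<nu> \<in> Ncone A \<beta> \<and> (\<exists>\<alpha>\<in>A. \<nu> \<alpha> \<noteq> 0) \<and>
     support_fun X (- Amul A \<nu>) < \<infinity> \<and>
     \<not> (\<exists>\<nu>1 \<nu>2 \<theta>. \<nu>1 \<in> Ncone A \<beta> \<and> \<nu>2 \<in> Ncone A \<beta> \<and> \<not> proportional A \<nu>1 \<nu>2 \<and>
           0 < \<theta> \<and> \<theta> < 1 \<and> (\<forall>\<alpha>\<in>A. \<nu> \<alpha> = \<theta> * \<nu>1 \<alpha> + (1 - \<theta>) * \<nu>2 \<alpha>) \<and>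
           affine_on_segment X A \<nu>1 \<nu>2)"

definition Lambda_X :: "(real^'n) set \<Rightarrow> (real^'n) set \<Rightarrow> (real^'n \<Rightarrow> real) set" where
  "Lambda_X X A = {lam. \<exists>\<beta>\<in>A. X_circuit X A \<beta> lam \<and> lam \<beta> = -1}"

definition phi :: "(real^'n) set \<Rightarrow> (real^'n) set \<Rightarrow> (real^'n \<Rightarrow> real) \<Rightarrow> (real^'n \<Rightarrow> real) \<Rightarrow> ereal" where
  "phi X A lam y = ereal (\<Sum>\<alpha>\<in>A. y \<alpha> * lam \<alpha>) + support_fun X (- Amul A lam)"

definition signomial :: "(real^'n) set \<Rightarrow> (real^'n \<Rightarrow> real) \<Rightarrow> real^'n \<Rightarrow> real" where
  "signomial A c x = (\<Sum>\<alpha>\<in>A. c \<alpha> * exp (\<alpha> \<bullet> x))"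

definition SAGE_cone_beta ::
  "(real^'n) set \<Rightarrow> (real^'n) set \<Rightarrow> real^'n \<Rightarrow> (real^'n \<Rightarrow> real) set" where
  "SAGE_cone_beta X A \<beta> = {c. supp_in A c \<and> (\<forall>\<alpha>\<in>A. \<alpha> \<noteq> \<beta> \<longrightarrow> c \<alpha> \<ge> 0) \<and>
                             (\<forall>x\<in>X. signomial A c x \<ge> 0)}"

definition SAGE_cone :: "(real^'n) set \<Rightarrow> (real^'n) set \<Rightarrow> (real^'n \<Rightarrow> real) set" where
  "SAGE_cone X A = {c. \<exists>f. (\<forall>\<beta>\<in>A. f \<beta> \<in> SAGE_cone_beta X A \<beta>) \<and>
                          c = (\<lambda>\<alpha>. \<Sum>\<beta>\<in>A. f \<beta> \<alpha>)}"

definition dual_cone :: "(real^'n) set \<Rightarrow> (real^'n \<Rightarrow> real) set \<Rightarrow> (real^'n \<Rightarrow> real) set" where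
  "dual_cone A C = {v. \<forall>c\<in>C. (\<Sum>\<alpha>\<in>A. v \<alpha> * c \<alpha>) \<ge> 0}"

end

theory Submission
  imports Defs
begin

text \<open>Write \<open>s = \<sigma>\<^sub>X(-\<A>\<lambda>)\<close> and \<open>L = \<Sum>\<^sub>\<alpha> y\<^sub>\<alpha> \<lambda>\<^sub>\<alpha>\<close>, so \<open>\<phi>\<^sub>\<lambda>(y) = L + s\<close>.
  Off \<open>\<beta>\<close> the entries of \<open>\<lambda>\<close> are nonnegative weights summing to \<open>1\<close>, so by weighted
  AM-GM the signomial with coefficients \<open>\<lambda>\<^sub>\<alpha> exp(-y\<^sub>\<alpha>)\<close> for \<open>\<alpha> \<noteq> \<beta>\<close> and
  \<open>-exp(-(y\<^sub>\<beta> + s + L))\<close> at \<open>\<beta>\<close> is nonnegative on \<open>X\<close>; it lies in \<open>C\<^sub>X(\<A>,\<beta>)\<close>.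
  Its pairing with \<open>exp y\<close> is \<open>1 - exp(-\<phi>\<^sub>\<lambda>(y))\<close>, negative when \<open>\<phi>\<^sub>\<lambda>(y) < 0\<close>.\<close>

lemma exp_weighted_sum_le:
  fixes w t :: "'a \<Rightarrow> real"
  assumes "finite I" and "\<And>i. i \<in> I \<Longrightarrow> w i \<ge> 0" and "sum w I = 1"
  shows "exp (\<Sum>i\<in>I. w i * t i) \<le> (\<Sum>i\<in>I. w i * exp (t i))"
proof -
  have "I \<noteq> {}" using assms(3) by auto
  then show ?thesis
    using convex_on_sum[OF assms(1) _ exp_convex assms(3), of t] assms(2) by simp
qed

lemma support_fun_finite_bound:
  assumes "X \<noteq> {}" and "support_fun X v < \<infinity>"
  obtains s where "support_fun X v = ereal s" and "\<And>x. x \<in> X \<Longrightarrow> v \<bullet> x \<le> s"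
proof -
  have upper: "ereal (v \<bullet> x) \<le> support_fun X v" if "x \<in> X" for x
    unfolding support_fun_def using that by (rule SUP_upper)
  then have "support_fun X v \<noteq> -\<infinity>" using assms(1) by fastforce
  with assms(2) obtain s where s: "support_fun X v = ereal s"
    by (cases "support_fun X v") auto
  with upper show thesis using that by fastforce
qed

lemma sum_Ncone_remove:
  assumes "finite A" and "\<beta> \<in> A" and "\<nu> \<in> Ncone A \<beta>"
  shows "sum \<nu> (A - {\<beta>}) = - \<nu> \<beta>"
  using assms unfolding Ncone_def by (simp add: sum.remove)

lemma SAGE_cone_beta_subset_SAGE_cone:
  assumes "finite A" and "\<beta> \<in> A"
  shows "SAGE_cone_beta X A \<beta> \<subseteq> SAGE_cone X A"
proof
  fix c assume c: "c \<in> SAGE_cone_beta X A \<beta>"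
  let ?f = "\<lambda>\<gamma>. if \<gamma> = \<beta> then c else (\<lambda>_. 0)"
  have zero: "(\<lambda>_. 0) \<in> SAGE_cone_beta X A \<gamma>" for \<gamma>
    unfolding SAGE_cone_beta_def supp_in_def signomial_def by simp
  have "(\<Sum>\<gamma>\<in>A. ?f \<gamma> \<alpha>) = (\<Sum>\<gamma>\<in>A. if \<gamma> = \<beta> then c \<alpha> else 0)" for \<alpha>
    by (rule sum.cong) auto
  then have "c = (\<lambda>\<alpha>. \<Sum>\<gamma>\<in>A. ?f \<gamma> \<alpha>)"
    using assms by simp
  then show "c \<in> SAGE_cone X A"
    unfolding SAGE_cone_def using c zero by (intro CollectI exI[of _ ?f]) auto
qed

definition circuit_coeffs ::
  "(real^'n) set \<Rightarrow> real^'n \<Rightarrow> (real^'n \<Rightarrow> real) \<Rightarrow> (real^'n \<Rightarrow> real) \<Rightarrow> real \<Rightarrow> real^'n \<Rightarrow> real"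
where
  "circuit_coeffs A \<beta> lam y s \<alpha> =
     (if \<alpha> = \<beta> then - exp (- (y \<beta> + s + (\<Sum>\<gamma>\<in>A. y \<gamma> * lam \<gamma>)))
      else if \<alpha> \<in> A then lam \<alpha> * exp (- y \<alpha>) else 0)"

lemma signomial_circuit_coeffs_nonneg:
  assumes "finite A" and "\<beta> \<in> A" and lam: "lam \<in> Ncone A \<beta>" "lam \<beta> = -1"
    and bound: "- Amul A lam \<bullet> x \<le> s"
  shows "signomial A (circuit_coeffs A \<beta> lam y s) x \<ge> 0"
proof -
  define B where "B = A - {\<beta>}"
  define L where "L = (\<Sum>\<gamma>\<in>A. y \<gamma> * lam \<gamma>)"
  have split: "sum g A = g \<beta> + sum g B" for g :: "_ \<Rightarrow> real"
    unfolding B_def using assms(1,2) by (simp add: sum.remove)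
  have weights: "sum lam B = 1" "\<And>\<alpha>. \<alpha> \<in> B \<Longrightarrow> lam \<alpha> \<ge> 0"
    using sum_Ncone_remove[OF assms(1,2) lam(1)] lam unfolding B_def Ncone_def by auto
  have Amul: "Amul A lam \<bullet> x = - (\<beta> \<bullet> x) + (\<Sum>\<alpha>\<in>B. lam \<alpha> * (\<alpha> \<bullet> x))"
    unfolding Amul_def inner_sum_left using split lam(2) by simp
  have L: "L = - y \<beta> + (\<Sum>\<alpha>\<in>B. lam \<alpha> * y \<alpha>)"
    unfolding L_def using split lam(2) by (simp add: mult.commute)
  have "exp (- (y \<beta> + s + L)) * exp (\<beta> \<bullet> x) \<le> exp (\<Sum>\<alpha>\<in>B. lam \<alpha> * (\<alpha> \<bullet> x - y \<alpha>))"
    using bound Amul L by (simp add: right_diff_distrib sum_subtractf flip: exp_add)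
  also have "\<dots> \<le> (\<Sum>\<alpha>\<in>B. lam \<alpha> * exp (\<alpha> \<bullet> x - y \<alpha>))"
    using assms(1) weights unfolding B_def by (intro exp_weighted_sum_le) auto
  also have "\<dots> = (\<Sum>\<alpha>\<in>B. circuit_coeffs A \<beta> lam y s \<alpha> * exp (\<alpha> \<bullet> x))"
    unfolding circuit_coeffs_def B_def by (intro sum.cong) (auto simp: mult.assoc mult_exp_exp)
  finally show ?thesis
    unfolding signomial_def using split[of "\<lambda>\<alpha>. circuit_coeffs A \<beta> lam y s \<alpha> * exp (\<alpha> \<bullet> x)"]
    by (simp add: circuit_coeffs_def L_def)
qed

lemma circuit_coeffs_in_SAGE_cone:
  assumes "finite A" and "\<beta> \<in> A" and "lam \<in> Ncone A \<beta>" "lam \<beta> = -1"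
    and "\<And>x. x \<in> X \<Longrightarrow> - Amul A lam \<bullet> x \<le> s"
  shows "circuit_coeffs A \<beta> lam y s \<in> SAGE_cone X A"
proof -
  let ?c = "circuit_coeffs A \<beta> lam y s"
  have "supp_in A ?c"
    unfolding supp_in_def circuit_coeffs_def using assms(2) by auto
  moreover have "?c \<alpha> \<ge> 0" if "\<alpha> \<in> A" "\<alpha> \<noteq> \<beta>" for \<alpha>
    using assms(3) that unfolding circuit_coeffs_def Ncone_def by simp
  moreover have "signomial A ?c x \<ge> 0" if "x \<in> X" for x
    using signomial_circuit_coeffs_nonneg[OF assms(1-4) assms(5)[OF that]] .
  ultimately have "?c \<in> SAGE_cone_beta X A \<beta>"
    unfolding SAGE_cone_beta_def by blast
  then show ?thesis using SAGE_cone_beta_subset_SAGE_cone[OF assms(1,2)] by blast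
qed

lemma pairing_exp_circuit_coeffs:
  assumes "finite A" and "\<beta> \<in> A" and "lam \<in> Ncone A \<beta>" "lam \<beta> = -1"
  shows "(\<Sum>\<alpha>\<in>A. exp (y \<alpha>) * circuit_coeffs A \<beta> lam y s \<alpha>)
           = 1 - exp (- ((\<Sum>\<alpha>\<in>A. y \<alpha> * lam \<alpha>) + s))"
proof -
  let ?c = "circuit_coeffs A \<beta> lam y s"
  have "(\<Sum>\<alpha>\<in>A - {\<beta>}. exp (y \<alpha>) * ?c \<alpha>) = sum lam (A - {\<beta>})"
    unfolding circuit_coeffs_def by (intro sum.cong) (auto simp: exp_minus)
  also have "\<dots> = 1"
    using sum_Ncone_remove[OF assms(1-3)] assms(4) by simp
  finally have rest: "(\<Sum>\<alpha>\<in>A - {\<beta>}. exp (y \<alpha>) * ?c \<alpha>) = 1" .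
  have "exp (y \<beta>) * ?c \<beta> = - exp (- ((\<Sum>\<alpha>\<in>A. y \<alpha> * lam \<alpha>) + s))"
    unfolding circuit_coeffs_def by (simp add: mult_exp_exp)
  with rest show ?thesis
    using assms(1,2) by (simp add: sum.remove)
qed

theorem lemma5p13:
  fixes X A :: "(real^'n) set" and y :: "real^'n \<Rightarrow> real" and lam :: "real^'n \<Rightarrow> real"
  assumes "X \<noteq> {}" and "closed X" and "convex X"
    and "finite A" and "A \<noteq> {}"
    and "\<forall>c. (\<forall>x\<in>X. signomial A c x = 0) \<longrightarrow> (\<forall>\<alpha>\<in>A. c \<alpha> = 0)"
    and "lam \<in> Lambda_X X A"
    and "phi X A lam y < 0"
  shows "(\<lambda>\<alpha>. exp (y \<alpha>)) \<notin> dual_cone A (SAGE_cone X A)"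
proof
  assume dual: "(\<lambda>\<alpha>. exp (y \<alpha>)) \<in> dual_cone A (SAGE_cone X A)"
  obtain \<beta> where \<beta>: "\<beta> \<in> A" "lam \<in> Ncone A \<beta>" "lam \<beta> = -1"
    and sigma_finite: "support_fun X (- Amul A lam) < \<infinity>"
    using assms(7) unfolding Lambda_X_def X_circuit_def by blast
  obtain s where s: "support_fun X (- Amul A lam) = ereal s"
    and bound: "\<And>x. x \<in> X \<Longrightarrow> - Amul A lam \<bullet> x \<le> s"
    using support_fun_finite_bound[OF assms(1) sigma_finite] by blast
  let ?c = "circuit_coeffs A \<beta> lam y s"
  have "?c \<in> SAGE_cone X A"
    using circuit_coeffs_in_SAGE_cone[OF assms(4) \<beta>] bound by blast
  with dual have "(\<Sum>\<alpha>\<in>A. exp (y \<alpha>) * ?c \<alpha>) \<ge> 0"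
    unfolding dual_cone_def by blast
  moreover have "(\<Sum>\<alpha>\<in>A. y \<alpha> * lam \<alpha>) + s < 0"
    using assms(8) s unfolding phi_def by simp
  ultimately show False
    using pairing_exp_circuit_coeffs[OF assms(4) \<beta>] by simp
qed

end
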